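(* We have $$\limsup_{m\to\infty}\frac{b_m\,\log\log\log m}{\log\log m}\ge 8;$$ in particular the sequence $(b_m)_{m\ge1}$ is unbounded.
   Context: For $n\ge 1$, $\phi_n(X)$ is the $n$-th cyclotomic polynomial (degree $\varphi(n)$, Euler's totient), and $\Phi_n(X,Y)=Y^{\varphi(n)}\phi_n(X/Y)$. For an integer $m\ge1$, $b_m$ is the number of triples $(n,x,y)\in\mathbb Z^3$ with $\varphi(n)>2$, $\max\{|x|,|y|\}\ge2$ and $\Phi_n(x,y)=m$. *)

theory Defs
  imports "HOL-Analysis.Analysis" "HOL-Number_Theory.Totient"
    "HOL-Computational_Algebra.Polynomial"
begin

definition cyclotomic :: "nat \<Rightarrow> complex poly" where
  "cyclotomic n = (\<Prod>k\<in>{k\<in>{1..n}. coprime k n}. [:- cis (2 * pi * real k / real n), 1:])"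

text \<open>Homogenization: Phi_n(X,Y) = Y^phi(n) phi_n(X/Y), written out coefficientwise.\<close>
definition cyclo_form :: "nat \<Rightarrow> int \<Rightarrow> int \<Rightarrow> complex" where
  "cyclo_form n x y = (\<Sum>i\<le>totient n. coeff (cyclotomic n) i * of_int x ^ i * of_int y ^ (totient n - i))"

definition b_count :: "nat \<Rightarrow> nat" where
  "b_count m = card {(n::int, x::int, y::int). n \<ge> 1 \<and> totient (nat n) > 2 \<and>
      max \<bar>x\<bar> \<bar>y\<bar> \<ge> 2 \<and> cyclo_form (nat n) x y = of_int (int m)}"

end

theory Submission
  imports Defs "HOL-Real_Asymp.Real_Asymp"
begin

text \<open>
  Over the primitive \<open>n\<close>-th roots of unity \<open>\<zeta>\<close> we have \<open>\<Phi>\<^sub>n(x,y) = \<Prod>(x - \<zeta> y)\<close>, and each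
  factor has modulus at least \<open>max \<bar>x\<bar> \<bar>y\<bar> \<cdot> \<bar>Im \<zeta>\<bar>\<close>. Since \<open>\<Phi>\<^sub>n\<close> has integer coefficients,
  \<open>\<Prod>2\<bar>Im \<zeta>\<bar> = \<bar>\<Phi>\<^sub>n(1) \<Phi>\<^sub>n(-1)\<bar> \<ge> 1\<close>, so \<open>\<bar>\<Phi>\<^sub>n(x,y)\<bar> \<ge> (max \<bar>x\<bar> \<bar>y\<bar> / 2)\<^bsup>\<phi>(n)\<^esup>\<close>; a
  finer look at the factors gives \<open>\<bar>\<Phi>\<^sub>n(x,y)\<bar>\<^sup>2 \<ge> (3/2)\<^bsup>\<phi>(n)\<^esup>\<close> whenever \<open>max \<bar>x\<bar> \<bar>y\<bar> \<ge> 2\<close>.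
  Hence every \<open>m\<close> has finitely many representations and \<open>b\<^sub>m\<close> really counts them.
  On the other hand \<open>\<Phi>\<^bsub>2^(j+1)\<^esub>(x,y) = x\<^bsup>2^j\<^esup> + y\<^bsup>2^j\<^esup>\<close>, so the Fermat number \<open>2\<^bsup>2^K\<^esup> + 1\<close>
  has the \<open>K - 1\<close> representations \<open>(2\<^bsup>j+1\<^esup>, 2\<^bsup>2^(K-j)\<^esup>, 1)\<close>, \<open>2 \<le> j \<le> K\<close>. As its
  \<open>log log\<close> is about \<open>K log 2\<close>, the ratio in the statement even tends to infinity along
  the Fermat numbers.
\<close>

section \<open>Cyclotomic polynomials as products over primitive roots of unity\<close>

abbreviation unity_root :: "nat \<Rightarrow> nat \<Rightarrow> complex" where
  "unity_root n k \<equiv> cis (2 * pi * real k / real n)"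

lemma cyclotomic_conv_totatives:
  "cyclotomic n = (\<Prod>k\<in>totatives n. [:- unity_root n k, 1:])"
  unfolding cyclotomic_def totatives_def by (intro prod.cong) auto

lemma lead_coeff_cyclotomic [simp]: "lead_coeff (cyclotomic n) = 1"
  unfolding cyclotomic_conv_totatives lead_coeff_prod by simp

lemma degree_cyclotomic: "degree (cyclotomic n) = totient n"
  unfolding cyclotomic_conv_totatives totient_def by (subst degree_prod_eq_sum_degree) auto

lemma monom_one_minus_one_eq_prod_unity_roots:
  assumes "n > 0"
  shows "monom 1 n - 1 = (\<Prod>k\<in>{0<..n}. [:- unity_root n k, 1:] :: complex poly)"
proof -
  let ?q = "\<Prod>k<n. [:- unity_root n k, 1:] :: complex poly"
  have "{..<n} = insert 0 {0<..<n}" "{0<..n} = insert n {0<..<n}"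
    using assms by auto
  moreover have "unity_root n n = 1"
    using assms by simp
  ultimately have shift: "(\<Prod>k\<in>{0<..n}. [:- unity_root n k, 1:]) = ?q"
    by (simp add: mult.commute)
  have "monom 1 n - 1 = ?q"
  proof (rule poly_eqI_degree_lead_coeff)
    have deg_q: "degree ?q = n"
      by (subst degree_prod_eq_sum_degree) auto
    then show "degree ?q \<le> n" by simp
    show "degree (monom 1 n - 1 :: complex poly) \<le> n"
      by (intro degree_diff_le) (auto simp: degree_monom_le)
    show "coeff (monom 1 n - 1) n = coeff ?q n"
      using assms lead_coeff_prod[of "\<lambda>k. [:- unity_root n k, 1:]" "{..<n}"] deg_q
      by (simp add: coeff_monom)
    show "card {z::complex. z ^ n = 1} \<ge> n"
      using bij_betw_same_card[OF Complex.bij_betw_roots_unity[OF assms]] by simp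
    fix z :: complex assume "z \<in> {z. z ^ n = 1}"
    moreover from this obtain k where "k < n" "z = unity_root n k"
      using Complex.bij_betw_roots_unity[OF assms] unfolding bij_betw_def by auto
    ultimately show "poly (monom 1 n - 1) z = poly ?q z"
      unfolding poly_prod by (auto simp: poly_monom intro!: prod_zero[symmetric])
  qed
  with shift show ?thesis by simp
qed

lemma prod_unity_roots_by_divisors:
  fixes f :: "complex \<Rightarrow> 'b :: comm_monoid_mult"
  assumes "n > 0"
  shows "(\<Prod>k\<in>{0<..n}. f (unity_root n k)) = (\<Prod>d | d dvd n. \<Prod>k\<in>totatives d. f (unity_root d k))"
proof -
  define A where "A = (\<lambda>d. {k\<in>{0<..n}. gcd k n = d})"
  have cover: "{0<..n} = (\<Union>d\<in>{d. d dvd n}. A d)"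
    by (auto simp: A_def)
  have "(\<Prod>k\<in>{0<..n}. f (unity_root n k)) = (\<Prod>d | d dvd n. \<Prod>k\<in>A d. f (unity_root n k))"
    unfolding cover using assms by (intro prod.UNION_disjoint) (auto simp: A_def)
  also have "\<dots> = (\<Prod>d | d dvd n. \<Prod>k\<in>totatives (n div d). f (unity_root (n div d) k))"
  proof (rule prod.cong[OF refl])
    fix d assume d: "d \<in> {d. d dvd n}"
    then obtain e where e: "n = d * e" by auto
    have "bij_betw (\<lambda>k. k * d) (totatives (n div d)) (A d)"
      unfolding A_def using d assms by (intro bij_betw_totatives_gcd_eq) auto
    then have "(\<Prod>k\<in>A d. f (unity_root n k)) = (\<Prod>k\<in>totatives (n div d). f (unity_root n (k * d)))"
      by (rule prod.reindex_bij_betw[symmetric])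
    also have "\<dots> = (\<Prod>k\<in>totatives (n div d). f (unity_root (n div d) k))"
      using assms e by (intro prod.cong refl) (simp add: field_simps)
    finally show "(\<Prod>k\<in>A d. f (unity_root n k)) = \<dots>" .
  qed
  also have "\<dots> = (\<Prod>d | d dvd n. \<Prod>k\<in>totatives d. f (unity_root d k))"
    by (rule prod.reindex_bij_witness[of _ "(div) n" "(div) n"]) (insert assms, auto elim!: dvdE)
  finally show ?thesis .
qed

lemma prod_cyclotomic_divisors:
  assumes "n > 0"
  shows "(\<Prod>d | d dvd n. cyclotomic d) = monom 1 n - 1"
  unfolding monom_one_minus_one_eq_prod_unity_roots[OF assms]
    prod_unity_roots_by_divisors[OF assms, of "\<lambda>z. [:- z, 1:]"] cyclotomic_conv_totatives ..

section \<open>Integrality of cyclotomic polynomials\<close>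

definition int_coeffs :: "'a::comm_ring_1 poly \<Rightarrow> bool" where
  "int_coeffs p \<longleftrightarrow> (\<forall>i. coeff p i \<in> \<int>)"

lemma int_coeffs_1 [simp]: "int_coeffs 1"
  by (simp add: int_coeffs_def coeff_1)

lemma int_coeffs_monom: "c \<in> \<int> \<Longrightarrow> int_coeffs (monom c k)"
  by (simp add: int_coeffs_def coeff_monom)

lemma int_coeffs_add: "int_coeffs p \<Longrightarrow> int_coeffs q \<Longrightarrow> int_coeffs (p + q)"
  and int_coeffs_diff: "int_coeffs p \<Longrightarrow> int_coeffs q \<Longrightarrow> int_coeffs (p - q)"
  by (simp_all add: int_coeffs_def)

lemma int_coeffs_mult: "int_coeffs p \<Longrightarrow> int_coeffs q \<Longrightarrow> int_coeffs (p * q)"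
  unfolding int_coeffs_def coeff_mult by (auto intro!: Ints_sum Ints_mult)

lemma int_coeffs_prod: "(\<And>x. x \<in> A \<Longrightarrow> int_coeffs (f x)) \<Longrightarrow> int_coeffs (\<Prod>x\<in>A. f x)"
  by (induction A rule: infinite_finite_induct) (auto intro: int_coeffs_mult)

lemma poly_in_Ints: "int_coeffs p \<Longrightarrow> z \<in> \<int> \<Longrightarrow> poly p z \<in> \<int>"
  unfolding poly_altdef int_coeffs_def by (auto intro!: Ints_sum Ints_mult Ints_power)

lemma int_coeffs_cancel_monic:
  fixes q r :: "'a::idom poly"
  assumes "int_coeffs q" "lead_coeff q = 1" "int_coeffs (q * r)"
  shows "int_coeffs r"
  using assms(3)
proof (induction "degree r" arbitrary: r rule: less_induct)
  case less
  define c where "c = lead_coeff r"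
  define r' where "r' = r - monom c (degree r)"
  have "c = lead_coeff (q * r)"
    by (simp add: lead_coeff_mult assms(2) c_def)
  then have c: "c \<in> \<int>"
    using less.prems unfolding int_coeffs_def by metis
  have "q * r' = q * r - q * monom c (degree r)"
    by (simp add: r'_def algebra_simps)
  then have "int_coeffs (q * r')"
    using assms(1) less.prems c by (metis int_coeffs_diff int_coeffs_mult int_coeffs_monom)
  moreover have "degree r' < degree r \<or> r' = 0"
  proof -
    have "degree r' \<le> degree r"
      unfolding r'_def by (intro degree_diff_le order_refl degree_monom_le)
    moreover have "coeff r' (degree r) = 0"
      by (simp add: r'_def c_def)
    ultimately show ?thesis
      by (metis le_neq_implies_less leading_coeff_0_iff)
  qed
  ultimately have "int_coeffs r'"
    using less.hyps by auto
  then have "int_coeffs (r' + monom c (degree r))"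
    using c by (intro int_coeffs_add int_coeffs_monom)
  then show ?case
    by (simp add: r'_def)
qed

lemma int_coeffs_cyclotomic: "n > 0 \<Longrightarrow> int_coeffs (cyclotomic n)"
proof (induction n rule: less_induct)
  case (less n)
  define D where "D = {d. d dvd n \<and> d < n}"
  have "{d. d dvd n} = insert n D" "n \<notin> D" "finite D"
    using less.prems by (auto simp: D_def dest: dvd_imp_le)
  then have "(\<Prod>d\<in>D. cyclotomic d) * cyclotomic n = monom 1 n - 1"
    using prod_cyclotomic_divisors[OF less.prems] by (simp add: mult.commute)
  moreover have "int_coeffs (\<Prod>d\<in>D. cyclotomic d)"
    using less.IH by (intro int_coeffs_prod) (auto simp: D_def intro: Nat.gr0I)
  moreover have "int_coeffs (monom 1 n - 1 :: complex poly)"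
    by (intro int_coeffs_diff int_coeffs_monom) auto
  ultimately show ?case
    using int_coeffs_cancel_monic[of "\<Prod>d\<in>D. cyclotomic d"] by (simp add: lead_coeff_prod)
qed

lemma one_le_norm_poly_cyclotomic:
  assumes "n > 0" "z \<in> \<int>" "poly (cyclotomic n) z \<noteq> 0"
  shows "1 \<le> norm (poly (cyclotomic n) z)"
proof -
  have "poly (cyclotomic n) z \<in> \<int>"
    using assms by (intro poly_in_Ints int_coeffs_cyclotomic)
  with assms(3) show ?thesis
    by (auto elim!: Ints_cases)
qed

section \<open>Lower bounds for the binary cyclotomic forms\<close>

lemma unity_root_eq_1_iff: "n > 0 \<Longrightarrow> unity_root n k = 1 \<longleftrightarrow> n dvd k"
  using complex_root_unity_eq_1[of n k] by (simp add: cis_conv_exp field_simps)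

lemma unity_root_totative_neq_1:
  assumes "n \<ge> 2" "k \<in> totatives n"
  shows "unity_root n k \<noteq> 1"
proof
  assume "unity_root n k = 1"
  then have "n dvd k"
    using assms by (simp add: unity_root_eq_1_iff)
  then have "is_unit n"
    using assms coprime_common_divisor[of k n n] by (simp add: in_totatives_iff)
  with assms show False
    by simp
qed

lemma unity_root_totative_neq_minus_1:
  assumes "n \<ge> 3" "k \<in> totatives n"
  shows "unity_root n k \<noteq> -1"
proof
  assume "unity_root n k = -1"
  moreover have "unity_root n k ^ 2 = unity_root n (2 * k)"
    unfolding power2_eq_square cis_mult by (simp add: field_simps)
  ultimately have "unity_root n (2 * k) = 1"
    by simp
  then have "n dvd 2 * k"
    using assms unity_root_eq_1_iff[of n "2 * k"] by simp
  then have "n dvd 2"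
    using assms by (metis coprime_commute coprime_dvd_mult_left_iff in_totatives_iff)
  with assms show False
    by (auto dest: dvd_imp_le)
qed

lemma norm_one_minus_mult_norm_one_plus:
  assumes "norm (w::complex) = 1"
  shows "norm (1 - w) * norm (1 + w) = 2 * \<bar>Im w\<bar>"
proof -
  have "w * cnj w = 1"
    using complex_norm_square[of w] assms by simp
  then have "(1 - w) * (1 + w) = w * (cnj w - w)"
    by (simp add: algebra_simps power2_eq_square)
  also have "cnj w - w = - complex_of_real (2 * Im w) * \<i>"
    using complex_diff_cnj[of w] by (simp add: algebra_simps)
  finally show ?thesis
    using assms by (simp add: norm_mult[symmetric] norm_mult abs_mult)
qed

lemma one_le_prod_norm_diff_unity_roots:
  assumes "n \<ge> 3" "z = 1 \<or> z = -1"
  shows "1 \<le> (\<Prod>k\<in>totatives n. norm (z - unity_root n k))"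
proof -
  have poly_eq: "poly (cyclotomic n) z = (\<Prod>k\<in>totatives n. z - unity_root n k)"
    by (simp add: cyclotomic_conv_totatives poly_prod)
  have "z - unity_root n k \<noteq> 0" if "k \<in> totatives n" for k
  proof -
    have "unity_root n k \<noteq> 1"
      by (rule unity_root_totative_neq_1) (use assms that in auto)
    moreover have "unity_root n k \<noteq> -1"
      by (rule unity_root_totative_neq_minus_1) (use assms that in auto)
    ultimately show ?thesis
      using assms(2) by auto
  qed
  then have "poly (cyclotomic n) z \<noteq> 0"
    unfolding poly_eq prod_zero_iff[OF finite_totatives] by blast
  moreover have "z \<in> \<int>"
    using assms(2) by auto
  ultimately have "1 \<le> norm (poly (cyclotomic n) z)"
    using assms(1) by (intro one_le_norm_poly_cyclotomic) auto
  then show ?thesis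
    by (simp add: poly_eq prod_norm)
qed

lemma one_le_prod_two_abs_Im_unity_roots:
  assumes "n \<ge> 3"
  shows "1 \<le> (\<Prod>k\<in>totatives n. 2 * \<bar>Im (unity_root n k)\<bar>)"
proof -
  have "1 * 1 \<le> (\<Prod>k\<in>totatives n. norm (1 - unity_root n k)) * (\<Prod>k\<in>totatives n. norm (-1 - unity_root n k))"
    using assms by (intro mult_mono one_le_prod_norm_diff_unity_roots prod_nonneg) auto
  also have "\<dots> = (\<Prod>k\<in>totatives n. norm (1 - unity_root n k) * norm (1 + unity_root n k))"
    unfolding prod.distrib[symmetric]
    by (intro prod.cong refl) (simp add: norm_minus_commute[of "-1"] add.commute)
  also have "\<dots> = (\<Prod>k\<in>totatives n. 2 * \<bar>Im (unity_root n k)\<bar>)"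
    by (intro prod.cong refl norm_one_minus_mult_norm_one_plus) simp
  finally show ?thesis by simp
qed

lemma cyclo_form_eq_prod:
  "cyclo_form n x y = (\<Prod>k\<in>totatives n. of_int x - unity_root n k * of_int y)"
proof (cases "y = 0")
  case True
  then have "cyclo_form n x y = (\<Sum>i\<le>totient n. if i = totient n then of_int x ^ totient n else 0)"
    unfolding cyclo_form_def by (intro sum.cong refl) (auto simp: lead_coeff_cyclotomic[unfolded degree_cyclotomic])
  with True show ?thesis
    by (simp add: totient_def)
next
  case False
  let ?d = "totient n" and ?y = "of_int y :: complex"
  have "cyclo_form n x y = (\<Sum>i\<le>?d. ?y ^ ?d * (coeff (cyclotomic n) i * (of_int x / ?y) ^ i))"
    unfolding cyclo_form_def
  proof (intro sum.cong refl)
    fix i assume "i \<in> {..?d}"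
    then have "?y ^ ?d = ?y ^ i * ?y ^ (?d - i)"
      by (simp add: power_add[symmetric])
    with False show "coeff (cyclotomic n) i * of_int x ^ i * ?y ^ (?d - i) = ?y ^ ?d * (coeff (cyclotomic n) i * (of_int x / ?y) ^ i)"
      by (simp add: power_divide field_simps)
  qed
  also have "\<dots> = ?y ^ ?d * poly (cyclotomic n) (of_int x / ?y)"
    by (simp add: poly_altdef sum_distrib_left degree_cyclotomic)
  also have "\<dots> = (\<Prod>k\<in>totatives n. ?y * (of_int x / ?y - unity_root n k))"
    by (simp add: cyclotomic_conv_totatives poly_prod prod.distrib totient_def)
  also have "\<dots> = (\<Prod>k\<in>totatives n. of_int x - unity_root n k * ?y)"
    using False by (intro prod.cong refl) (simp add: field_simps)
  finally show ?thesis .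
qed

lemma norm_cyclo_form:
  "norm (cyclo_form n x y) = (\<Prod>k\<in>totatives n. norm (of_int x - unity_root n k * of_int y))"
  by (simp add: cyclo_form_eq_prod prod_norm)

lemma abs_Im_mult_max_le_norm_diff:
  fixes x y :: real
  assumes "norm w = 1"
  shows "\<bar>Im w\<bar> * max \<bar>x\<bar> \<bar>y\<bar> \<le> norm (of_real x - w * of_real y)"
proof -
  have "\<bar>Im w\<bar> * \<bar>y\<bar> \<le> norm (of_real x - w * of_real y)"
    using abs_Im_le_cmod[of "of_real x - w * of_real y"] by (simp add: abs_mult)
  moreover have "\<bar>Im w\<bar> * \<bar>x\<bar> \<le> norm (of_real x - w * of_real y)"
  proof -
    have "cnj w * w = 1"
      using complex_norm_square[of w] assms by (simp add: mult.commute)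
    then have "cnj w * (of_real x - w * of_real y) = cnj w * of_real x - of_real y"
      by (simp add: algebra_simps)
    moreover have "\<bar>Im w\<bar> * \<bar>x\<bar> \<le> norm (cnj w * of_real x - of_real y)"
      using abs_Im_le_cmod[of "cnj w * of_real x - of_real y"] by (simp add: abs_mult)
    ultimately show ?thesis
      using assms by (metis norm_mult complex_mod_cnj mult_1)
  qed
  ultimately show ?thesis
    by (simp add: max_def)
qed

lemma norm_diff_mult_unit_sq:
  fixes x y :: real
  assumes "norm w = 1"
  shows "norm (of_real x - w * of_real y)^2 = x^2 + y^2 - 2 * x * y * Re w"
proof -
  have "norm (of_real x - w * of_real y)^2 = x^2 + y^2 * ((Re w)^2 + (Im w)^2) - 2 * x * y * Re w"
    unfolding cmod_power2 by (simp add: power2_eq_square algebra_simps)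
  with assms show ?thesis
    using cmod_power2[of w] by simp
qed

lemma three_abs_Im_le_five_minus_four_abs_Re:
  assumes "norm w = 1"
  shows "3 * \<bar>Im w\<bar> \<le> 5 - 4 * \<bar>Re w\<bar>"
proof -
  have "(Re w)^2 + (Im w)^2 = 1"
    using assms cmod_power2[of w] by simp
  then have "(5 - 4 * \<bar>Re w\<bar>)^2 - (3 * \<bar>Im w\<bar>)^2 = (5 * \<bar>Re w\<bar> - 4)^2"
    by (simp add: power2_eq_square algebra_simps)
  then have "(3 * \<bar>Im w\<bar>)^2 \<le> (5 - 4 * \<bar>Re w\<bar>)^2"
    using zero_le_power2[of "5 * \<bar>Re w\<bar> - 4"] by linarith
  then show ?thesis
    by (rule power2_le_imp_le) (use abs_Re_le_cmod[of w] assms in simp)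
qed

text \<open>For \<open>max \<bar>x\<bar> \<bar>y\<bar> \<ge> 3\<close> the bound \<open>\<bar>Im w\<bar> * max \<bar>x\<bar> \<bar>y\<bar>\<close> suffices; for
  \<open>max \<bar>x\<bar> \<bar>y\<bar> = 2\<close> the factor has to be computed exactly.\<close>
lemma three_abs_Im_le_norm_diff_sq:
  fixes x y :: int
  assumes w: "norm w = 1" and "\<bar>x\<bar> \<noteq> \<bar>y\<bar>" "2 \<le> max \<bar>x\<bar> \<bar>y\<bar>"
  shows "3 * \<bar>Im w\<bar> \<le> norm (of_int x - w * of_int y)^2"
proof -
  define N where "N = norm (of_int x - w * of_int y)"
  have "\<bar>norm (of_int x :: complex) - norm (w * of_int y)\<bar> \<le> N"
    unfolding N_def by (rule norm_triangle_ineq3)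
  then have "1 \<le> N"
    using assms(2) w by (simp add: norm_mult)
  then have N_le_sq: "N \<le> N^2"
    using mult_left_mono[of 1 N N] by (simp add: power2_eq_square)
  show ?thesis
  proof (cases "max \<bar>x\<bar> \<bar>y\<bar> \<ge> 3")
    case True
    then have "\<bar>Im w\<bar> * 3 \<le> \<bar>Im w\<bar> * of_int (max \<bar>x\<bar> \<bar>y\<bar>)"
      by (intro mult_left_mono) auto
    also have "\<dots> \<le> N"
      using abs_Im_mult_max_le_norm_diff[OF w, of x y] by (simp add: N_def)
    finally show ?thesis
      using N_le_sq unfolding N_def by linarith
  next
    case False
    define S P where "S = real_of_int (x^2 + y^2)" and "P = real_of_int \<bar>x * y\<bar>"
    have "of_int x * of_int y * Re w \<le> P * \<bar>Re w\<bar>"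
      unfolding P_def by (metis abs_ge_self abs_mult of_int_abs of_int_mult)
    with norm_diff_mult_unit_sq[OF w, of x y] have N_sq_ge: "S - 2 * P * \<bar>Re w\<bar> \<le> N^2"
      unfolding S_def N_def by simp
    have "x \<in> {-2, -1, 0, 1, 2}" "y \<in> {-2, -1, 0, 1, 2}"
      using False by auto
    then consider "x * y = 0" "x^2 + y^2 = 4" | "\<bar>x * y\<bar> = 2" "x^2 + y^2 = 5"
      using assms(2,3) by auto
    then show ?thesis
    proof cases
      case 1
      then have "S = 4" "P = 0"
        by (simp_all add: S_def P_def)
      with N_sq_ge abs_Im_le_cmod[of w] w show ?thesis
        unfolding N_def by simp
    next
      case 2
      then have "S = 5" "P = 2"
        by (simp_all add: S_def P_def)
      with N_sq_ge three_abs_Im_le_five_minus_four_abs_Re[OF w] show ?thesis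
        unfolding N_def by simp
    qed
  qed
qed

lemma norm_cyclo_form_ge_half_max:
  assumes "n \<ge> 3"
  shows "(of_int (max \<bar>x\<bar> \<bar>y\<bar>) / 2) ^ totient n \<le> norm (cyclo_form n x y)"
proof -
  let ?M = "real_of_int (max \<bar>x\<bar> \<bar>y\<bar>)"
  have "(?M / 2) ^ totient n * 1 \<le> (?M / 2) ^ totient n * (\<Prod>k\<in>totatives n. 2 * \<bar>Im (unity_root n k)\<bar>)"
    using assms by (intro mult_left_mono one_le_prod_two_abs_Im_unity_roots) auto
  also have "\<dots> = (\<Prod>k\<in>totatives n. ?M / 2 * (2 * \<bar>Im (unity_root n k)\<bar>))"
    by (simp only: prod.distrib prod_constant totient_def)
  also have "\<dots> = (\<Prod>k\<in>totatives n. \<bar>Im (unity_root n k)\<bar> * ?M)"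
    by (intro prod.cong) auto
  also have "\<dots> \<le> norm (cyclo_form n x y)"
  proof -
    have "\<bar>Im (unity_root n k)\<bar> * ?M \<le> norm (of_int x - unity_root n k * of_int y)" for k
      using abs_Im_mult_max_le_norm_diff[of "unity_root n k" "of_int x" "of_int y"] by simp
    then show ?thesis
      unfolding norm_cyclo_form by (intro prod_mono) auto
  qed
  finally show ?thesis by simp
qed

lemma norm_cyclo_form_sq_ge:
  assumes "n \<ge> 3" "2 \<le> max \<bar>x\<bar> \<bar>y\<bar>"
  shows "(3/2) ^ totient n \<le> norm (cyclo_form n x y) ^ 2"
proof (cases "\<bar>x\<bar> = \<bar>y\<bar>")
  case True
  then obtain z :: complex where z: "z = 1 \<or> z = -1" and y_eq: "of_int y = z * of_int x"
    by (auto simp: abs_eq_iff intro: that[of 1] that[of "-1"])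
  have factor: "norm (of_int x - unity_root n k * of_int y) = \<bar>of_int x\<bar> * norm (z - unity_root n k)" for k
  proof -
    have "of_int x - unity_root n k * of_int y = z * of_int x * (z - unity_root n k)"
      using z by (auto simp: y_eq algebra_simps)
    then show ?thesis
      using z by (auto simp: norm_mult)
  qed
  have "(2::real) ^ totient n * 1 \<le> \<bar>of_int x\<bar> ^ totient n * (\<Prod>k\<in>totatives n. norm (z - unity_root n k))"
    using assms True z by (intro mult_mono power_mono one_le_prod_norm_diff_unity_roots) auto
  also have "\<dots> = norm (cyclo_form n x y)"
    unfolding norm_cyclo_form factor by (simp add: prod.distrib totient_def)
  finally have "2 ^ totient n \<le> norm (cyclo_form n x y)"
    by simp
  moreover have "(3/2::real) ^ totient n \<le> 2 ^ totient n" "1 \<le> (2::real) ^ totient n"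
    by (intro power_mono one_le_power; simp)+
  ultimately show ?thesis
    using self_le_power[of "norm (cyclo_form n x y)" 2] by linarith
next
  case False
  have "(3/2) ^ totient n * 1 \<le> (3/2) ^ totient n * (\<Prod>k\<in>totatives n. 2 * \<bar>Im (unity_root n k)\<bar>)"
    using assms by (intro mult_left_mono one_le_prod_two_abs_Im_unity_roots) auto
  also have "\<dots> = (\<Prod>k\<in>totatives n. 3/2 * (2 * \<bar>Im (unity_root n k)\<bar>))"
    by (simp only: prod.distrib prod_constant totient_def)
  also have "\<dots> \<le> norm (cyclo_form n x y) ^ 2"
  proof -
    have "3 * \<bar>Im (unity_root n k)\<bar> \<le> norm (of_int x - unity_root n k * of_int y) ^ 2" for k
      using three_abs_Im_le_norm_diff_sq[of "unity_root n k" x y] False assms(2) by simp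
    then show ?thesis
      unfolding norm_cyclo_form prod_power_distrib by (intro prod_mono) auto
  qed
  finally show ?thesis by simp
qed

lemma cyclo_form_eq_of_nat_bounds:
  assumes "totient n > 2" "2 \<le> max \<bar>x\<bar> \<bar>y\<bar>" "cyclo_form n x y = of_nat m"
  shows "totient n \<le> 2 * m^2" "max \<bar>x\<bar> \<bar>y\<bar> \<le> 2 * int m"
proof -
  have n: "n \<ge> 3"
    using assms(1) totient_le[of n] by linarith
  have norm_eq: "norm (cyclo_form n x y) = real m"
    using assms(3) by simp
  have "1 + real (totient n) * (1/2) \<le> (1 + 1/2) ^ totient n"
    by (rule Bernoulli_inequality) simp
  also have "\<dots> \<le> real m ^ 2"
    using norm_cyclo_form_sq_ge[OF n assms(2)] norm_eq by simp
  finally have "real (totient n) \<le> real (2 * m^2)"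
    by simp
  then show "totient n \<le> 2 * m^2"
    by (simp only: of_nat_le_iff)
  have "of_int (max \<bar>x\<bar> \<bar>y\<bar>) / 2 \<le> (of_int (max \<bar>x\<bar> \<bar>y\<bar>) / 2 :: real) ^ totient n"
    using assms n by (intro self_le_power) auto
  also have "\<dots> \<le> real m"
    using norm_cyclo_form_ge_half_max[OF n] norm_eq by metis
  finally show "max \<bar>x\<bar> \<bar>y\<bar> \<le> 2 * int m"
    by linarith
qed

section \<open>Finiteness of the representation sets\<close>

lemma dvd_fact_if_totient_le:
  assumes "n > 0" "totient n \<le> B"
  shows "n dvd fact (2 * B)"
proof (rule multiplicity_le_imp_dvd)
  show "n \<noteq> 0" using assms by simp
  fix p :: nat assume p: "prime p"
  let ?k = "multiplicity p n"
  show "?k \<le> multiplicity p (fact (2 * B))"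
  proof (cases "?k = 0")
    case False
    have "totient (p ^ ?k) \<le> totient n"
      using assms by (intro totient_dvd_mono multiplicity_dvd) auto
    with assms have "totient (p ^ ?k) \<le> B"
      by simp
    then have le: "p ^ (?k - 1) * (p - 1) \<le> B"
      using totient_prime_power[OF p] False by simp
    have "p ^ ?k = p ^ (?k - 1) * p"
      using False by (metis power_minus_mult neq0_conv)
    also have "\<dots> \<le> p ^ (?k - 1) * (2 * (p - 1))"
      using prime_ge_2_nat[OF p] by (intro mult_left_mono) auto
    finally have "p ^ ?k dvd fact (2 * B)"
      using le prime_gt_0_nat[OF p] by (intro dvd_fact) auto
    then show ?thesis
      using p by (intro multiplicity_geI) (auto simp: fact_nonzero)
  qed simp
qed

lemma finite_totient_le: "finite {n. totient n \<le> B}"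
proof (rule finite_subset)
  show "{n. totient n \<le> B} \<subseteq> {..fact (2 * B)}"
  proof
    fix n assume "n \<in> {n. totient n \<le> B}"
    then show "n \<in> {..fact (2 * B)}"
      using dvd_fact_if_totient_le[of n B] by (cases "n = 0") (auto intro: dvd_imp_le)
  qed
qed simp

definition cyclo_reprs :: "nat \<Rightarrow> (int \<times> int \<times> int) set" where
  "cyclo_reprs m = {(n, x, y). n \<ge> 1 \<and> totient (nat n) > 2 \<and>
      max \<bar>x\<bar> \<bar>y\<bar> \<ge> 2 \<and> cyclo_form (nat n) x y = of_int (int m)}"

lemma b_count_conv_card: "b_count m = card (cyclo_reprs m)"
  unfolding b_count_def cyclo_reprs_def ..

lemma finite_cyclo_reprs: "finite (cyclo_reprs m)"
proof (rule finite_subset)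
  let ?I = "{-(2 * int m)..2 * int m}"
  show "cyclo_reprs m \<subseteq> int ` {n. totient n \<le> 2 * m^2} \<times> ?I \<times> ?I"
  proof safe
    fix n x y :: int
    assume "(n, x, y) \<in> cyclo_reprs m"
    then have "n \<ge> 1" "totient (nat n) \<le> 2 * m^2" "max \<bar>x\<bar> \<bar>y\<bar> \<le> 2 * int m"
      using cyclo_form_eq_of_nat_bounds[of "nat n" x y m] by (simp_all add: cyclo_reprs_def)
    then show "n \<in> int ` {n. totient n \<le> 2 * m^2}" "x \<in> ?I" "y \<in> ?I"
      by (auto intro: image_eqI[of n int "nat n"])
  qed
  show "finite (int ` {n. totient n \<le> 2 * m^2} \<times> ?I \<times> ?I)"
    using finite_totient_le by auto
qed

section \<open>Representations of Fermat numbers\<close>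

lemma cyclotomic_two_power: "cyclotomic (2 ^ Suc j) = monom 1 (2 ^ j) + 1"
proof -
  have "d dvd (2::nat) ^ Suc j \<longleftrightarrow> d = 2 ^ Suc j \<or> d dvd 2 ^ j" for d
    unfolding divides_primepow_nat[OF two_is_prime_nat] by (metis le_Suc_eq order_refl)
  then have divisors: "{d. d dvd (2::nat) ^ Suc j} = insert (2 ^ Suc j) {d. d dvd 2 ^ j}"
    by blast
  have "2 ^ Suc j \<notin> {d. d dvd (2::nat) ^ j}"
    by (auto dest: dvd_imp_le)
  then have "monom 1 (2 ^ Suc j) - 1 = cyclotomic (2 ^ Suc j) * (monom 1 (2 ^ j) - 1)"
    using prod_cyclotomic_divisors[of "2 ^ Suc j"] prod_cyclotomic_divisors[of "2 ^ j"] divisors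
    by simp
  moreover have "monom 1 (2 ^ Suc j) - 1 = (monom 1 (2 ^ j) + 1) * (monom 1 (2 ^ j) - (1::complex poly))"
    by (simp add: algebra_simps mult_monom mult_2)
  moreover have "coeff (monom 1 (2 ^ j) - (1::complex poly)) (2 ^ j) = 1"
    by (simp add: coeff_monom coeff_1)
  then have "monom 1 (2 ^ j) - (1::complex poly) \<noteq> 0"
    by (metis coeff_0 zero_neq_one)
  ultimately show ?thesis
    by (metis mult_right_cancel)
qed

lemma cyclo_form_two_power:
  "cyclo_form (2 ^ Suc j) x y = of_int x ^ (2 ^ j) + of_int y ^ (2 ^ j)"
proof -
  let ?N = "2 ^ j :: nat"
  define t where "t = (\<lambda>i. (of_int x :: complex) ^ i * of_int y ^ (?N - i))"
  have "totient (2 ^ Suc j) = ?N"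
    using totient_prime_power_Suc[OF two_is_prime_nat, of j] by simp
  then have "cyclo_form (2 ^ Suc j) x y = (\<Sum>i\<le>?N. (if i = ?N then t i else 0) + (if i = 0 then t i else 0))"
    unfolding cyclo_form_def cyclotomic_two_power t_def
    by (intro sum.cong) (auto simp: coeff_monom coeff_1)
  also have "\<dots> = t ?N + t 0"
    by (simp add: sum.distrib)
  finally show ?thesis
    by (simp add: t_def)
qed

lemma b_count_fermat_ge:
  assumes "K \<ge> 2"
  shows "K - 1 \<le> b_count (2 ^ 2 ^ K + 1)"
proof -
  define g where "g = (\<lambda>j::nat. (int (2 ^ Suc j), (2::int) ^ 2 ^ (K - j), 1::int))"
  have "g j \<in> cyclo_reprs (2 ^ 2 ^ K + 1)" if j: "j \<in> {2..K}" for j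
  proof -
    have "(4::nat) \<le> 2 ^ j"
      using j power_increasing[of 2 j "2::nat"] by simp
    then have "totient (2 ^ Suc j) > 2"
      using totient_prime_power_Suc[OF two_is_prime_nat, of j] by simp
    moreover have "(2::int) \<le> 2 ^ 2 ^ (K - j)"
      using self_le_power[of "2::int" "2 ^ (K - j)"] by simp
    then have "2 \<le> max \<bar>(2::int) ^ 2 ^ (K - j)\<bar> \<bar>1\<bar>"
      by simp
    moreover have "2 ^ (K - j) * 2 ^ j = (2::nat) ^ K"
      using j by (simp flip: power_add)
    then have "((2::complex) ^ 2 ^ (K - j)) ^ 2 ^ j = 2 ^ 2 ^ K"
      by (simp only: power_mult[symmetric])
    then have "cyclo_form (2 ^ Suc j) (2 ^ 2 ^ (K - j)) 1 = of_int (int (2 ^ 2 ^ K + 1))"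
      unfolding cyclo_form_two_power by simp
    moreover have "(1::int) \<le> 2 * 2 ^ j"
      using one_le_power[of "2::int" j] by linarith
    ultimately show ?thesis
      unfolding g_def cyclo_reprs_def mem_Collect_eq case_prod_conv nat_int by auto
  qed
  then have "g ` {2..K} \<subseteq> cyclo_reprs (2 ^ 2 ^ K + 1)"
    by (rule image_subsetI)
  have "inj_on g {2..K}"
    by (auto simp: g_def inj_on_def)
  then have "K - 1 = card (g ` {2..K})"
    by (simp add: card_image)
  also have "\<dots> \<le> card (cyclo_reprs (2 ^ 2 ^ K + 1))"
    using finite_cyclo_reprs \<open>g ` {2..K} \<subseteq> cyclo_reprs (2 ^ 2 ^ K + 1)\<close> by (rule card_mono)
  finally show ?thesis
    by (simp only: b_count_conv_card)
qed

lemma eventually_fermat_ratio_ge: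
  "eventually (\<lambda>K. \<forall>b. K - 1 \<le> b \<longrightarrow>
     8 \<le> real b * ln (ln (ln (real (2 ^ 2 ^ K + 1)))) / ln (ln (real (2 ^ 2 ^ K + 1)))) sequentially"
proof -
  define r where "r = (\<lambda>x::real. ln (ln (ln (2 powr 2 powr x + 1))) / ln (ln (2 powr 2 powr x + 1)))"
  have r_nat: "r (real K) = ln (ln (ln (real (2 ^ 2 ^ K + 1)))) / ln (ln (real (2 ^ 2 ^ K + 1)))" for K
  proof -
    have "(2::real) powr (2 powr real K) + 1 = real (2 ^ 2 ^ K + 1)"
      using powr_realpow[of 2 K] powr_realpow[of 2 "2 ^ K"] by simp
    then show ?thesis
      by (simp only: r_def)
  qed
  have "eventually (\<lambda>x. 8 \<le> (x - 1) * r x) at_top"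
    unfolding r_def by real_asymp
  moreover have "eventually (\<lambda>x. 0 \<le> r x) at_top"
    unfolding r_def by real_asymp
  ultimately have "eventually (\<lambda>K. 8 \<le> (real K - 1) * r (real K) \<and> 0 \<le> r (real K)) sequentially"
    by (intro eventually_compose_filterlim[OF _ filterlim_real_sequentially] eventually_conj)
  then show ?thesis
  proof (rule eventually_mono, safe)
    fix K b :: nat
    assume "8 \<le> (real K - 1) * r (real K)" "0 \<le> r (real K)" "K - 1 \<le> b"
    moreover have "real K - 1 \<le> real b"
      using \<open>K - 1 \<le> b\<close> by linarith
    ultimately have "8 \<le> real b * r (real K)"
      using mult_right_mono[of "real K - 1" "real b" "r (real K)"] by linarith
    then show "8 \<le> real b * ln (ln (ln (real (2 ^ 2 ^ K + 1)))) / ln (ln (real (2 ^ 2 ^ K + 1)))"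
      by (simp add: r_nat)
  qed
qed

theorem lemma1p5:
  shows "limsup (\<lambda>m::nat. ereal (real (b_count m) * ln (ln (ln (real m))) / ln (ln (real m)))) \<ge> 8
         \<and> (\<forall>B. \<exists>m\<ge>1. b_count m > B)"
proof
  let ?f = "\<lambda>m::nat. ereal (real (b_count m) * ln (ln (ln (real m))) / ln (ln (real m)))"
  let ?fermat = "\<lambda>K::nat. 2 ^ 2 ^ K + 1 :: nat"
  have "eventually (\<lambda>K. 8 \<le> (?f \<circ> ?fermat) K) sequentially"
    using eventually_fermat_ratio_ge eventually_ge_at_top[of 2]
  proof eventually_elim
    case (elim K)
    then have "8 \<le> real (b_count (?fermat K)) * ln (ln (ln (real (?fermat K)))) / ln (ln (real (?fermat K)))"
      using b_count_fermat_ge[of K] by blast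
    then show ?case
      by simp
  qed
  then have "8 \<le> limsup (?f \<circ> ?fermat)"
    by (intro le_Limsup) simp_all
  also have "\<dots> \<le> limsup ?f"
    by (intro limsup_subseq_mono strict_monoI) (simp add: power_strict_increasing)
  finally show "limsup ?f \<ge> 8" .
  show "\<forall>B. \<exists>m\<ge>1. b_count m > B"
  proof
    fix B :: nat
    have "B < b_count (?fermat (B + 2))"
      using b_count_fermat_ge[of "B + 2"] by simp
    then show "\<exists>m\<ge>1. b_count m > B"
      by (metis le_add2)
  qed
qed

end
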